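(* Let $n\ge1$, $m=2n-1$ and $0\le\alpha\le n-1$. An element $s\in R_\alpha^{\langle\tau\rangle}\setminus\{\pm1\}$ lies in $Q_\alpha$ if and only if either (a) $\alpha\ge\lfloor n/2\rfloor$, $s\not\equiv\pm1\bmod u$, and $s^2-1\bmod u$ is a square in $k^\times$; or (b) $s\equiv\varepsilon\bmod u$ with $\varepsilon\in\{\pm1\}$, $s=\varepsilon+t^js_0+O(t^{j+1})$ with $s_0\in k^\times$ and $\max\{1,n-(2\alpha+1)\}\le j\le n-\alpha-1$, and $\varepsilon(-1)^j2s_0$ is a square in $k^\times$. Moreover, with $\mathrm{pr}_\alpha:R_\alpha^{\langle\tau\rangle}=k[t]/(t^{n-\alpha})\to k[t]/(t^{n-\alpha-1})$ the reduction map: (i) if $0\le\alpha\le n-2$, the preimage of $1$ (resp. of $-1$) under $\mathrm{pr}_\alpha|_{Q_\alpha}$ has exactly $(q-1)/2$ elements; (ii) if $0\le\alpha\le n-2$ and $s_0\in R_\alpha^{\langle\tau\rangle,\prime}$ with $\mathrm{pr}_\alpha(s_0)\ne\pm1$, then $\mathrm{pr}_\alpha^{-1}(\mathrm{pr}_\alpha(s_0))$ has $q$ elements, and $s_0\in Q_\alpha$ if and only if $\mathrm{pr}_\alpha^{-1}(\mathrm{pr}_\alpha(s_0))\subseteq Q_\alpha$; (iii) $\#Q_{n-1}=(q-3)/2$.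
   Context: $k=\mathbb F_q$, $q$ odd, $t=u^2$. For $0\le\alpha<n$ and $m=2n-1$ let $R_\alpha=k[u]/(u^{m-2\alpha})$ with $\tau$ acting by $u\mapsto-u$, $R_\alpha^{\langle\tau\rangle}=k[t]/(t^{n-\alpha})$ its invariants, $R_\alpha^{\langle\tau\rangle,\prime}=\{s\in R_\alpha^{\langle\tau\rangle}: s\equiv\pm1\bmod u^{m+1-2(2\alpha+1)}\}$ (no condition if the exponent is $\le0$), $N_{\tau,\alpha}:R_\alpha\to R_\alpha^{\langle\tau\rangle}$, $s\mapsto s\tau(s)$, and $Q_\alpha=\{s\in R_\alpha^{\langle\tau\rangle,\prime}: s\tau(s)-1\in N_{\tau,\alpha}(R_\alpha)\}\setminus\{\pm1\}$. *)

theory Defs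
  imports "HOL-Computational_Algebra.Polynomial" "HOL-Library.Cardinality"
begin

text \<open>Elements of k[u]/(u^N) are represented by polynomials in u with all
coefficients of index \<ge> N equal to zero; t = u^2.\<close>

definition trunc_u :: "nat \<Rightarrow> 'a::comm_ring_1 poly \<Rightarrow> 'a poly" where
  "trunc_u N p = (\<Sum>i<N. monom (coeff p i) i)"

definition tau :: "'a::comm_ring_1 poly \<Rightarrow> 'a poly" where
  "tau p = pcompose p [:0, -1:]"

definition R_len :: "nat \<Rightarrow> nat \<Rightarrow> nat" where
  "R_len n \<alpha> = (2*n - 1) - 2*\<alpha>"

definition R_alpha :: "nat \<Rightarrow> nat \<Rightarrow> 'a::comm_ring_1 poly set" where
  "R_alpha n \<alpha> = {p. \<forall>i\<ge>R_len n \<alpha>. coeff p i = 0}"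

definition R_inv :: "nat \<Rightarrow> nat \<Rightarrow> 'a::comm_ring_1 poly set" where
  "R_inv n \<alpha> = {s \<in> R_alpha n \<alpha>. tau s = s}"

definition congr_u :: "nat \<Rightarrow> 'a::comm_ring_1 poly \<Rightarrow> 'a poly \<Rightarrow> bool" where
  "congr_u E p q \<longleftrightarrow> (\<forall>i<E. coeff p i = coeff q i)"

text \<open>exponent m + 1 - 2(2 alpha + 1), truncated at 0 (no condition if \<le> 0)\<close>
definition R_inv' :: "nat \<Rightarrow> nat \<Rightarrow> 'a::comm_ring_1 poly set" where
  "R_inv' n \<alpha> = {s \<in> R_inv n \<alpha>.
     congr_u ((2*n - 1) + 1 - 2*(2*\<alpha>+1)) s 1 \<or> congr_u ((2*n - 1) + 1 - 2*(2*\<alpha>+1)) s (-1)}"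

definition N_tau :: "nat \<Rightarrow> nat \<Rightarrow> 'a::comm_ring_1 poly \<Rightarrow> 'a poly" where
  "N_tau n \<alpha> s = trunc_u (R_len n \<alpha>) (s * tau s)"

definition Q :: "nat \<Rightarrow> nat \<Rightarrow> 'a::comm_ring_1 poly set" where
  "Q n \<alpha> = {s \<in> R_inv' n \<alpha>. N_tau n \<alpha> s - 1 \<in> N_tau n \<alpha> ` R_alpha n \<alpha>} - {1, -1}"

text \<open>reduction k[t]/(t^(n-alpha)) \<rightarrow> k[t]/(t^(n-alpha-1)), i.e. modulo u^(2(n-alpha-1))\<close>
definition pr_alpha :: "nat \<Rightarrow> nat \<Rightarrow> 'a::comm_ring_1 poly \<Rightarrow> 'a poly" where
  "pr_alpha n \<alpha> s = trunc_u (2*(n - \<alpha> - 1)) s"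

definition is_nz_square :: "'a::comm_ring_1 \<Rightarrow> bool" where
  "is_nz_square c \<longleftrightarrow> (\<exists>x. x \<noteq> 0 \<and> x^2 = c)"

end

theory Submission
  imports Defs
begin

text \<open>
  Since \<open>2\<close> is invertible, \<open>R\<^sub>\<alpha>\<^sup>\<tau>\<close> consists of the even polynomials in \<open>u\<close> of degree below
  \<open>L = m - 2\<alpha>\<close>, and for such \<open>s\<close> the norm \<open>s \<tau>(s)\<close> is \<open>s\<^sup>2\<close>; so \<open>s \<in> Q\<^sub>\<alpha>\<close> means the
  congruence condition of \<open>R\<^sub>\<alpha>\<^sup>\<tau>\<^sup>,\<^sup>'\<close> together with solvability of \<open>x \<tau>(x) \<equiv> s\<^sup>2 - 1 mod u\<^sup>L\<close>.
  For an even \<open>f\<close> whose lowest nonzero coefficient sits at \<open>u\<^sup>2\<^sup>j\<close> with \<open>2j < L\<close>, the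
  equation \<open>x \<tau>(x) \<equiv> f\<close> is solvable iff \<open>(-1)\<^sup>j f\<^sub>2\<^sub>j\<close> is a nonzero square: the lowest
  coefficient of \<open>x \<tau>(x)\<close> is \<open>(-1)\<^sup>j x\<^sub>j\<^sup>2\<close>, and conversely an even square root of
  \<open>(-1)\<^sup>j f / u\<^sup>2\<^sup>j\<close> can be Hensel-lifted, taking \<open>x = u\<^sup>j w\<close>. Applied to
  \<open>s\<^sup>2 - 1 = (s - \<epsilon>)(s + \<epsilon>)\<close> this yields the conditions (a) and (b).

  For the counts, the fibres of \<open>pr\<^sub>\<alpha>\<close> are the lines \<open>s + c t\<^sup>n\<^sup>-\<^sup>\<alpha>\<^sup>-\<^sup>1\<close>. Away from \<open>\<plusminus>1\<close>
  the conditions only see \<open>pr\<^sub>\<alpha>(s)\<close>; over \<open>\<plusminus>1\<close> they ask that \<open>\<plusminus>2c\<close> be a nonzero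
  square, and for \<open>\<alpha> = n - 1\<close> that \<open>c\<^sup>2 - 1\<close> be one. These sets of \<open>c\<close> have \<open>(q - 1)/2\<close> and
  \<open>(q - 3)/2\<close> elements, as images of the 2:1 maps \<open>x \<mapsto> x\<^sup>2/a\<close> and \<open>p \<mapsto> (p + p\<^sup>-\<^sup>1)/2\<close>.
\<close>

lemma coeff_trunc_u: "coeff (trunc_u N p) i = (if i < N then coeff p i else 0)"
  unfolding trunc_u_def by (simp add: coeff_sum)

lemma coeff_tau: "coeff (tau p) i = (-1)^i * coeff p i"
  unfolding tau_def using coeff_pcompose_linear[of p "-1"] by simp

lemma coeff_const: "coeff [:c:] i = (if i = 0 then c else 0)"
  by (simp add: coeff_pCons split: nat.splits)

lemma of_nat_CARD_eq_0: "of_nat CARD('a::{finite,ring_1}) = (0::'a)"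
proof -
  have "bij (\<lambda>x::'a. x + 1)"
    by (rule bijI') (auto intro: exI[of _ "_ - 1"])
  hence "(\<Sum>x\<in>UNIV. x + (1::'a)) = (\<Sum>x\<in>UNIV. x)"
    using sum.reindex_bij_betw[of "\<lambda>x. x + 1" UNIV UNIV id] by simp
  thus ?thesis by (simp add: sum.distrib)
qed

lemma two_neq_zero_if_odd_card:
  assumes "odd CARD('a::{finite,field})"
  shows "(2::'a) \<noteq> 0"
proof
  assume two: "(2::'a) = 0"
  obtain k where "CARD('a) = 2*k + 1" using assms oddE by blast
  hence "of_nat CARD('a) = (2 * of_nat k + 1 :: 'a)" by simp
  thus False using two of_nat_CARD_eq_0[where 'a='a] by simp
qed

section \<open>Counting squares in the finite field\<close>

lemma card_eq_twice_if_fibers_2: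
  assumes "finite A" "f ` A = B" "\<forall>b\<in>B. card {a\<in>A. f a = b} = 2"
  shows "card A = 2 * card B"
proof -
  have "card A = card (\<Union>b\<in>B. {a\<in>A. f a = b})" using assms(2) by (intro arg_cong[of _ _ card]) auto
  also have "\<dots> = (\<Sum>b\<in>B. card {a\<in>A. f a = b})"
    using assms(1,2) by (intro card_UN_disjoint) auto
  finally show ?thesis using assms(3) by simp
qed

lemma card_nz_square_multiples:
  fixes k :: "'a::{finite,field}"
  assumes two: "(2::'a) \<noteq> 0" and k: "k \<noteq> 0"
  shows "card {c. is_nz_square (k * c)} = (CARD('a) - 1) div 2"
proof -
  let ?f = "\<lambda>x::'a. x^2 / k"
  have img: "?f ` (UNIV - {0}) = {c. is_nz_square (k * c)}"
  proof (intro equalityI subsetI)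
    fix c assume "c \<in> ?f ` (UNIV - {0})"
    thus "c \<in> {c. is_nz_square (k * c)}" using k by (auto simp: is_nz_square_def)
  next
    fix c assume "c \<in> {c. is_nz_square (k * c)}"
    then obtain y where "y \<noteq> 0" "y^2 = k * c" unfolding is_nz_square_def by blast
    thus "c \<in> ?f ` (UNIV - {0})" using k by (auto intro!: image_eqI[of _ _ y])
  qed
  have "{x \<in> UNIV - {0}. ?f x = ?f y} = {y, -y}" if "y \<noteq> 0" for y
    using k that by (auto simp: power2_eq_iff)
  moreover have "y \<noteq> -y" if "y \<noteq> 0" for y :: 'a
    using that two by (metis add_eq_0_iff mult_2 mult_eq_0_iff)
  ultimately have "\<forall>c\<in>{c. is_nz_square (k * c)}. card {x \<in> UNIV - {0}. ?f x = c} = 2"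
    unfolding img[symmetric] by auto
  from card_eq_twice_if_fibers_2[OF _ img this] show ?thesis
    by (simp add: card_Diff_singleton)
qed

lemma add_inverse_eq_add_inverse_iff:
  fixes a p :: "'a::field"
  assumes a: "a \<noteq> 0" and p: "p \<noteq> 0"
  shows "a + inverse a = p + inverse p \<longleftrightarrow> a = p \<or> a = inverse p"
proof
  assume "a + inverse a = p + inverse p"
  hence "a * (a * p) + inverse a * (a * p) = p * (a * p) + inverse p * (a * p)"
    by (simp only: distrib_right[symmetric])
  moreover have "inverse a * (a * p) = p" "inverse p * (a * p) = a" using a p by simp_all
  ultimately have "a * (a * p) + p = p * (a * p) + a" by simp
  hence "(a - p) * (p * a - 1) = 0" by algebra
  hence "a = p \<or> p * a = 1" by (simp only: mult_eq_0_iff) simp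
  thus "a = p \<or> a = inverse p" using inverse_unique by blast
qed (use a p in auto)

lemma is_nz_square_minus_one_iff:
  fixes c :: "'a::field"
  assumes two: "(2::'a) \<noteq> 0"
  shows "is_nz_square (c^2 - 1) \<longleftrightarrow> (\<exists>p. p \<noteq> 0 \<and> p * p \<noteq> 1 \<and> c = (p + inverse p) / 2)"
proof
  assume "is_nz_square (c^2 - 1)"
  then obtain y where y: "y \<noteq> 0" "y^2 = c^2 - 1" unfolding is_nz_square_def by blast
  have inv: "(c - y) * (c + y) = 1" using y(2) by algebra
  hence "inverse (c - y) = c + y" by (rule inverse_unique)
  moreover have "c - y \<noteq> 0" using inv by auto
  moreover have "(c - y) * (c - y) \<noteq> 1"
  proof -
    have "c - y \<noteq> c + y" using y(1) two by simp
    hence "(c - y) * (c - y) \<noteq> (c - y) * (c + y)" using \<open>c - y \<noteq> 0\<close> by simp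
    thus ?thesis unfolding inv .
  qed
  ultimately show "\<exists>p. p \<noteq> 0 \<and> p * p \<noteq> 1 \<and> c = (p + inverse p) / 2"
    using two by (intro exI[of _ "c - y"]) simp
next
  assume "\<exists>p. p \<noteq> 0 \<and> p * p \<noteq> 1 \<and> c = (p + inverse p) / 2"
  then obtain p where p: "p \<noteq> 0" "p * p \<noteq> 1" "c = (p + inverse p) / 2" by blast
  have "(4::'a) \<noteq> 0" using two by (metis mult_eq_0_iff numeral_Bit0_eq_double)
  hence "((p + inverse p) / 2)^2 - 1 = ((p - inverse p) / 2)^2"
    using p(1) two by (simp add: field_simps power2_eq_square)
  hence "c^2 - 1 = ((p - inverse p) / 2)^2" unfolding p(3) .
  moreover have "(p - inverse p) / 2 \<noteq> 0" using p(1,2) two by (auto simp: field_simps)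
  ultimately show "is_nz_square (c^2 - 1)" unfolding is_nz_square_def by metis
qed

lemma card_nz_square_minus_one:
  assumes two: "(2::'a::{finite,field}) \<noteq> 0"
  shows "card {c::'a. is_nz_square (c^2 - 1)} = (CARD('a) - 3) div 2"
proof -
  define A where "A = UNIV - {0::'a, 1, -1}"
  define f where "f = (\<lambda>p::'a. (p + inverse p) / 2)"
  have A: "p \<in> A \<longleftrightarrow> p \<noteq> 0 \<and> p * p \<noteq> 1" for p
    using power2_eq_1_iff[of p] by (auto simp: A_def power2_eq_square)
  have img: "f ` A = {c. is_nz_square (c^2 - 1)}"
    using is_nz_square_minus_one_iff[OF two] by (auto simp: A f_def)
  have "{a\<in>A. f a = f p} = {p, inverse p}" if "p \<in> A" for p
  proof -
    have "f a = f p \<longleftrightarrow> a + inverse a = p + inverse p" for a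
      unfolding f_def using two by (simp only: divide_cancel_right) simp
    hence "f a = f p \<longleftrightarrow> a \<in> {p, inverse p}" if "a \<in> A" for a
      using that \<open>p \<in> A\<close> add_inverse_eq_add_inverse_iff[of a p] by (simp add: A)
    moreover have "inverse p \<in> A" using that by (simp add: A field_simps)
    ultimately show ?thesis using that by blast
  qed
  moreover have "p \<noteq> inverse p" if "p \<in> A" for p using that by (auto simp: A field_simps)
  ultimately have "\<forall>b\<in>f ` A. card {a\<in>A. f a = b} = 2" by auto
  from card_eq_twice_if_fibers_2[OF _ refl this]
  have "card A = 2 * card {c::'a. is_nz_square (c^2 - 1)}" unfolding img by simp
  moreover have "card {0::'a, 1, -1} = 3" using two by (auto simp: minus_equation_iff)
  hence "card A = CARD('a) - 3" unfolding A_def by (simp add: card_Diff_subset)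
  ultimately show ?thesis by simp
qed

section \<open>Even polynomials and the norm equation\<close>

definition even_poly :: "'a::comm_ring_1 poly \<Rightarrow> bool" where
  "even_poly p \<longleftrightarrow> (\<forall>i. odd i \<longrightarrow> coeff p i = 0)"

lemma tau_eq_iff_even_poly:
  assumes "(2::'a::field) \<noteq> 0"
  shows "tau (p::'a poly) = p \<longleftrightarrow> even_poly p"
proof -
  have "(-1)^i * coeff p i = coeff p i \<longleftrightarrow> even i \<or> coeff p i = 0" for i
    using assms by (cases "even i") simp_all
  thus ?thesis unfolding poly_eq_iff coeff_tau even_poly_def by blast
qed

lemma even_poly_mult: "even_poly p \<Longrightarrow> even_poly q \<Longrightarrow> even_poly (p * q)"
  unfolding even_poly_def coeff_mult
proof (intro allI impI sum.neutral ballI)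
  fix i j :: nat assume "\<forall>i. odd i \<longrightarrow> coeff p i = 0" "\<forall>i. odd i \<longrightarrow> coeff q i = 0"
    "odd i" "j \<in> {..i}"
  moreover have "odd (i - j)" if "even j" using that \<open>odd i\<close> \<open>j \<in> {..i}\<close> by simp
  ultimately show "coeff p j * coeff q (i - j) = 0" by (cases "odd j") simp_all
qed

lemma even_poly_diff: "even_poly p \<Longrightarrow> even_poly q \<Longrightarrow> even_poly (p - q)"
  by (simp add: even_poly_def)

lemma even_poly_const: "even_poly [:c:]"
  by (auto simp: even_poly_def coeff_const)

lemma congr_u_mult:
  assumes "congr_u N p p'" "congr_u N q q'"
  shows "congr_u N (p * q) (p' * q')"
  using assms unfolding congr_u_def coeff_mult by (auto intro!: sum.cong)

lemma congr_u_mono: "congr_u N p q \<Longrightarrow> M \<le> N \<Longrightarrow> congr_u M p q"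
  by (simp add: congr_u_def)

lemma coeff_mult_lowest:
  fixes p q :: "'a::comm_ring_1 poly"
  assumes "\<forall>i<a. coeff p i = 0" "\<forall>i<b. coeff q i = 0"
  shows "(\<forall>i<a+b. coeff (p*q) i = 0) \<and> coeff (p*q) (a+b) = coeff p a * coeff q b"
proof -
  obtain p' where p: "p = monom 1 a * p'" using assms(1) monom_1_dvd_iff' by (metis dvdE)
  obtain q' where q: "q = monom 1 b * q'" using assms(2) monom_1_dvd_iff' by (metis dvdE)
  have "p * q = monom 1 (a+b) * (p' * q')" by (simp add: p q mult_monom ac_simps)
  thus ?thesis by (simp add: coeff_monom_mult p q coeff_mult_0)
qed

text \<open>Hensel lifting of a square root, one coefficient at a time; at odd steps the
  correction vanishes, so the root stays even.\<close>

lemma even_sqrt_lift: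
  fixes f :: "'a::field poly"
  assumes two: "(2::'a) \<noteq> 0" and f: "even_poly f" and f0: "coeff f 0 = a^2" and a: "a \<noteq> 0"
  shows "\<exists>w. even_poly w \<and> coeff w 0 = a \<and> congr_u N (w * w) f"
proof -
  have "\<exists>w. even_poly w \<and> coeff w 0 = a \<and> congr_u (Suc N) (w * w) f"
  proof (induction N)
    case 0
    show ?case using f0 by (intro exI[of _ "[:a:]"]) (simp add: even_poly_const congr_u_def power2_eq_square)
  next
    case (Suc N)
    then obtain w where w: "even_poly w" "coeff w 0 = a" "congr_u (Suc N) (w * w) f" by blast
    define M where "M = Suc N"
    define e where "e = (coeff f M - coeff (w * w) M) / (2 * a)"
    define w' where "w' = w + monom e M"
    have sq: "w' * w' = w * w + monom e M * (w + w')"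
      unfolding w'_def by (simp add: algebra_simps)
    have "coeff (w + w') 0 = 2 * a"
      unfolding w'_def coeff_add using w(2) by (simp add: M_def)
    hence "coeff (w' * w') M = coeff (w * w) M + e * (2 * a)"
      unfolding sq by (simp add: coeff_monom_mult)
    hence "coeff (w' * w') M = coeff f M"
      using two a by (simp add: e_def)
    moreover have "congr_u M (w' * w') f"
      using w(3) unfolding sq congr_u_def M_def by (simp add: coeff_monom_mult)
    ultimately have "congr_u (Suc M) (w' * w') f"
      by (simp add: congr_u_def less_Suc_eq)
    moreover have "even_poly w'"
    proof (cases "even M")
      case True thus ?thesis using w(1) by (simp add: w'_def even_poly_def)
    next
      case False
      hence "e = 0" using f even_poly_mult[OF w(1) w(1)] by (simp add: e_def even_poly_def)
      thus ?thesis using w(1) by (simp add: w'_def)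
    qed
    moreover have "coeff w' 0 = a" using w(2) by (simp add: w'_def M_def)
    ultimately show ?case unfolding M_def by blast
  qed
  thus ?thesis using congr_u_mono[of "Suc N" _ f N] by auto
qed

lemma coeff_norm_lowest:
  fixes x :: "'a::field poly"
  assumes "\<forall>i<2*j. coeff (x * tau x) i = 0" "coeff (x * tau x) (2*j) \<noteq> 0"
  shows "coeff (x * tau x) (2*j) = (-1)^j * (coeff x j)^2"
proof -
  have "x \<noteq> 0" using assms(2) by auto
  then obtain k where k: "coeff x k \<noteq> 0" by (metis coeff_0 poly_eq_iff)
  define v where "v = (LEAST k. coeff x k \<noteq> 0)"
  have xv: "coeff x v \<noteq> 0" unfolding v_def using k by (rule LeastI)
  have "\<forall>i<v. coeff x i = 0" unfolding v_def using not_less_Least by blast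
  hence low: "\<forall>i<v+v. coeff (x * tau x) i = 0"
    and cv: "coeff (x * tau x) (v+v) = (-1)^v * (coeff x v)^2"
    using coeff_mult_lowest[of v x v "tau x"] by (simp_all add: coeff_tau power2_eq_square ac_simps)
  have "v = j"
  proof (rule linorder_cases[of v j])
    assume "v < j" thus ?thesis using assms(1) cv xv by simp
  next
    assume "j < v" thus ?thesis using low assms(2) by simp
  qed
  thus ?thesis using cv by (simp add: mult_2)
qed

lemma tau_monom_mult_even:
  assumes "even_poly w"
  shows "tau (monom 1 j * w) = smult ((-1)^j) (monom 1 j * w)"
proof -
  have "(-1)^i * coeff w (i - j) = (-1)^j * coeff w (i - j)" if "j \<le> i" for i
    using assms that unfolding even_poly_def
    by (cases "even (i - j)") (auto simp: minus_one_power_iff)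
  thus ?thesis by (auto simp: poly_eq_iff coeff_tau coeff_monom_mult)
qed

lemma ex_norm_congr_iff_nz_square:
  fixes f :: "'a::field poly"
  assumes two: "(2::'a) \<noteq> 0" and f: "even_poly f" and low: "\<forall>i<2*j. coeff f i = 0"
    and nz: "coeff f (2*j) \<noteq> 0" and jL: "2*j < L"
  shows "(\<exists>x. congr_u L (x * tau x) f) \<longleftrightarrow> is_nz_square ((-1)^j * coeff f (2*j))"
proof
  assume "\<exists>x. congr_u L (x * tau x) f"
  then obtain x where x: "congr_u L (x * tau x) f" by blast
  have "\<forall>i<2*j. coeff (x * tau x) i = 0" "coeff (x * tau x) (2*j) = coeff f (2*j)"
    using x low jL unfolding congr_u_def by simp_all
  hence "coeff f (2*j) = (-1)^j * (coeff x j)^2" using coeff_norm_lowest nz by metis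
  hence "(-1)^j * coeff f (2*j) = (coeff x j)^2"
    by (simp flip: power_mult_distrib mult.assoc)
  moreover from this have "coeff x j \<noteq> 0" using nz by auto
  ultimately show "is_nz_square ((-1)^j * coeff f (2*j))" unfolding is_nz_square_def by metis
next
  assume "is_nz_square ((-1)^j * coeff f (2*j))"
  then obtain b where b: "b \<noteq> 0" "b^2 = (-1)^j * coeff f (2*j)" unfolding is_nz_square_def by blast
  obtain g where g: "f = monom 1 (2*j) * g" using low monom_1_dvd_iff' by (metis dvdE)
  have "coeff g i = coeff f (2*j + i)" for i unfolding g by (simp add: coeff_monom_mult)
  hence "even_poly (smult ((-1)^j) g)" "coeff (smult ((-1)^j) g) 0 = b^2"
    using f b unfolding even_poly_def by auto
  then obtain w where w: "even_poly w" "congr_u L (w * w) (smult ((-1)^j) g)"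
    using even_sqrt_lift[OF two _ _ b(1), of _ L] by blast
  define x where "x = monom 1 j * w"
  have "x * tau x = smult ((-1)^j) (monom 1 (2*j) * (w * w))"
    unfolding x_def tau_monom_mult_even[OF w(1)] by (simp add: mult_monom ac_simps flip: mult_2)
  moreover have "congr_u L (smult ((-1)^j) (monom 1 (2*j) * (w * w))) f"
    using w(2) unfolding g congr_u_def by (auto simp: coeff_monom_mult)
  ultimately show "\<exists>x. congr_u L (x * tau x) f" by metis
qed

lemma N_tau_image_iff:
  fixes s :: "'a::comm_ring_1 poly"
  assumes s: "tau s = s" and L: "R_len n \<alpha> \<ge> 1"
  shows "N_tau n \<alpha> s - 1 \<in> N_tau n \<alpha> ` R_alpha n \<alpha> \<longleftrightarrow>
         (\<exists>x. congr_u (R_len n \<alpha>) (x * tau x) (s * s - 1))"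
proof
  assume "N_tau n \<alpha> s - 1 \<in> N_tau n \<alpha> ` R_alpha n \<alpha>"
  then obtain x where x: "N_tau n \<alpha> s - 1 = N_tau n \<alpha> x" by blast
  have "coeff (x * tau x) i = coeff (s * s - 1) i" if "i < R_len n \<alpha>" for i
    using arg_cong[OF x, of "\<lambda>p. coeff p i"] that s by (simp add: N_tau_def coeff_trunc_u)
  hence "congr_u (R_len n \<alpha>) (x * tau x) (s * s - 1)" unfolding congr_u_def by blast
  thus "\<exists>x. congr_u (R_len n \<alpha>) (x * tau x) (s * s - 1)" by blast
next
  assume "\<exists>x. congr_u (R_len n \<alpha>) (x * tau x) (s * s - 1)"
  then obtain x where x: "congr_u (R_len n \<alpha>) (x * tau x) (s * s - 1)" by blast
  define x' where "x' = trunc_u (R_len n \<alpha>) x"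
  have "x' \<in> R_alpha n \<alpha>" unfolding x'_def R_alpha_def by (simp add: coeff_trunc_u)
  moreover have "congr_u (R_len n \<alpha>) (x' * tau x') (x * tau x)"
    by (rule congr_u_mult) (simp_all add: congr_u_def x'_def coeff_trunc_u coeff_tau)
  hence "coeff (N_tau n \<alpha> x') i = coeff (N_tau n \<alpha> s - 1) i" for i
    using x s L unfolding congr_u_def by (auto simp: N_tau_def coeff_trunc_u)
  hence "N_tau n \<alpha> x' = N_tau n \<alpha> s - 1" by (simp add: poly_eq_iff)
  ultimately show "N_tau n \<alpha> s - 1 \<in> N_tau n \<alpha> ` R_alpha n \<alpha>" by (metis image_eqI)
qed

section \<open>Characterisation of \<open>Q\<close>\<close>

definition Q_unit_cond :: "nat \<Rightarrow> nat \<Rightarrow> 'a::comm_ring_1 poly \<Rightarrow> bool" where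
  "Q_unit_cond n \<alpha> s \<longleftrightarrow> n div 2 \<le> \<alpha> \<and> coeff s 0 \<noteq> 1 \<and> coeff s 0 \<noteq> -1
     \<and> is_nz_square ((coeff s 0)^2 - 1)"

definition Q_pm1_cond :: "nat \<Rightarrow> nat \<Rightarrow> 'a::comm_ring_1 poly \<Rightarrow> bool" where
  "Q_pm1_cond n \<alpha> s \<longleftrightarrow> (\<exists>\<epsilon>\<in>{1, -1}. \<exists>j s\<^sub>0. coeff s 0 = \<epsilon>
     \<and> (\<forall>i. 0 < i \<and> i < j \<longrightarrow> coeff s (2*i) = 0)
     \<and> coeff s (2*j) = s\<^sub>0 \<and> s\<^sub>0 \<noteq> 0
     \<and> 1 \<le> j \<and> n - (2*\<alpha>+1) \<le> j \<and> j \<le> n - \<alpha> - 1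
     \<and> is_nz_square (\<epsilon> * (-1)^j * 2 * s\<^sub>0))"

lemma R_inv_iff:
  assumes "(2::'a::field) \<noteq> 0"
  shows "(s::'a poly) \<in> R_inv n \<alpha> \<longleftrightarrow> (\<forall>i\<ge>R_len n \<alpha>. coeff s i = 0) \<and> even_poly s"
  unfolding R_inv_def R_alpha_def using tau_eq_iff_even_poly[OF assms] by auto

lemma R_inv_coeff_nonzero_less:
  "s \<in> R_inv n \<alpha> \<Longrightarrow> coeff s i \<noteq> 0 \<Longrightarrow> i < R_len n \<alpha>"
  unfolding R_inv_def R_alpha_def using not_le by blast

lemma Q_subset_R_inv: "Q n \<alpha> \<subseteq> R_inv n \<alpha>"
  unfolding Q_def R_inv'_def by auto

lemma Q_iff_congr_norm:
  assumes "\<alpha> < n" "s \<in> R_inv n \<alpha>" "s \<notin> {1, -1}"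
  shows "s \<in> Q n \<alpha> \<longleftrightarrow>
    (congr_u (2*n - (4*\<alpha>+2)) s 1 \<or> congr_u (2*n - (4*\<alpha>+2)) s (-1))
    \<and> (\<exists>x. congr_u (R_len n \<alpha>) (x * tau x) (s * s - 1))"
proof -
  have "tau s = s" "R_len n \<alpha> \<ge> 1" using assms by (simp_all add: R_inv_def R_len_def)
  moreover have "(2*n - 1) + 1 - 2*(2*\<alpha>+1) = 2*n - (4*\<alpha>+2)" using assms(1) by simp
  ultimately show ?thesis using assms N_tau_image_iff[of s n \<alpha>]
    by (auto simp: Q_def R_inv'_def)
qed

lemma Q_iff_unit_cond:
  fixes s :: "'a::field poly"
  assumes two: "(2::'a) \<noteq> 0" and "\<alpha> < n" "s \<in> R_inv n \<alpha>" and c: "coeff s 0 \<notin> {1, -1}"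
  shows "s \<in> Q n \<alpha> \<longleftrightarrow> Q_unit_cond n \<alpha> s"
proof -
  have "s \<notin> {1, -1}" using c by auto
  moreover have "congr_u E s 1 \<or> congr_u E s (-1) \<longleftrightarrow> E = 0" for E
    using c by (cases E) (auto simp: congr_u_def)
  moreover have "2*n - (4*\<alpha>+2) = 0 \<longleftrightarrow> n div 2 \<le> \<alpha>" by linarith
  moreover have "coeff (s * s - 1) 0 = (coeff s 0)^2 - 1"
    by (simp add: coeff_mult_0 power2_eq_square)
  moreover have "(coeff s 0)^2 - 1 \<noteq> 0" using c power2_eq_1_iff by fastforce
  moreover have "even_poly (s * s - 1)" "R_len n \<alpha> > 0"
    using assms by (simp_all add: R_inv_iff even_poly_mult even_poly_diff even_poly_const
        one_pCons R_len_def)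
  ultimately show ?thesis
    using ex_norm_congr_iff_nz_square[OF two, of "s * s - 1" 0 "R_len n \<alpha>"] assms c
    by (simp add: Q_iff_congr_norm Q_unit_cond_def)
qed

lemma first_nonconstant_even_coeff:
  assumes "even_poly s" "s \<noteq> [:coeff s 0:]"
  obtains j where "0 < j" "\<forall>i. 0 < i \<and> i < j \<longrightarrow> coeff s (2*i) = 0" "coeff s (2*j) \<noteq> 0"
proof -
  obtain i where "coeff s i \<noteq> coeff [:coeff s 0:] i"
    using assms(2) by (metis poly_eq_iff)
  hence i: "i \<noteq> 0" "coeff s i \<noteq> 0" by (auto simp: coeff_const split: if_splits)
  hence "even i" using assms(1) by (auto simp: even_poly_def)
  hence "0 < i div 2 \<and> coeff s (2 * (i div 2)) \<noteq> 0" using i by auto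
  hence "\<exists>j. 0 < j \<and> coeff s (2*j) \<noteq> 0" by blast
  from LeastI_ex[OF this] not_less_Least[of _ "\<lambda>j. 0 < j \<and> coeff s (2*j) \<noteq> 0"]
  show ?thesis by (intro that) auto
qed

lemma congr_const_below_first:
  assumes "even_poly s" "\<forall>i. 0 < i \<and> i < j \<longrightarrow> coeff s (2*i) = 0"
  shows "congr_u (2*j) s [:coeff s 0:]"
  unfolding congr_u_def
proof (intro allI impI)
  fix i assume "i < 2*j"
  thus "coeff s i = coeff [:coeff s 0:] i"
    using assms by (cases "even i") (auto simp: coeff_const even_poly_def)
qed

lemma congr_pm1_iff_le:
  fixes s :: "'a::comm_ring_1 poly"
  assumes \<epsilon>: "\<epsilon> \<in> {1, -1}" and low: "congr_u (2*j) s [:\<epsilon>:]"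
    and j: "0 < j" "coeff s (2*j) \<noteq> 0"
  shows "congr_u E s 1 \<or> congr_u E s (-1) \<longleftrightarrow> E \<le> 2*j"
proof
  assume "congr_u E s 1 \<or> congr_u E s (-1)"
  moreover have "coeff (1::'a poly) (2*j) = 0" "coeff (-1::'a poly) (2*j) = 0" using j(1) by simp_all
  ultimately show "E \<le> 2*j" using j(2) by (metis congr_u_def not_le)
next
  assume "E \<le> 2*j"
  hence "congr_u E s [:\<epsilon>:]" using low congr_u_mono by blast
  thus "congr_u E s 1 \<or> congr_u E s (-1)" using \<epsilon> by (auto simp: one_pCons)
qed

lemma ex_norm_congr_square_minus_one_iff:
  fixes s :: "'a::field poly"
  assumes two: "(2::'a) \<noteq> 0" and "even_poly s" and \<epsilon>: "\<epsilon> \<in> {1, -1}"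
    and low: "congr_u (2*j) s [:\<epsilon>:]" and j: "0 < j" "coeff s (2*j) \<noteq> 0" and jL: "2*j < L"
  shows "(\<exists>x. congr_u L (x * tau x) (s * s - 1)) \<longleftrightarrow> is_nz_square (\<epsilon> * (-1)^j * 2 * coeff s (2*j))"
proof -
  have "[:\<epsilon>:] * [:\<epsilon>:] = 1" using \<epsilon> by (auto simp: one_pCons)
  hence "s * s - 1 = (s - [:\<epsilon>:]) * (s + [:\<epsilon>:])"
    by (metis square_diff_square_factored mult.commute)
  moreover have "\<forall>i<2*j. coeff (s - [:\<epsilon>:]) i = 0" using low by (simp add: congr_u_def)
  moreover have "coeff (s + [:\<epsilon>:]) 0 = 2 * \<epsilon>" using low j(1) by (simp add: congr_u_def)
  ultimately have low: "\<forall>i<2*j. coeff (s * s - 1) i = 0"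
    and lowest: "coeff (s * s - 1) (2*j) = coeff s (2*j) * (2 * \<epsilon>)"
    using coeff_mult_lowest[of "2*j" "s - [:\<epsilon>:]" 0 "s + [:\<epsilon>:]"] j(1)
    by (simp_all add: coeff_const)
  have "even_poly (s * s - 1)"
    using assms(2) by (simp add: even_poly_mult even_poly_diff even_poly_const one_pCons)
  moreover have "coeff (s * s - 1) (2*j) \<noteq> 0" using lowest \<epsilon> j(2) two by auto
  ultimately have "(\<exists>x. congr_u L (x * tau x) (s * s - 1)) \<longleftrightarrow>
      is_nz_square ((-1)^j * coeff (s * s - 1) (2*j))"
    using ex_norm_congr_iff_nz_square[OF two _ low _ jL] by blast
  moreover have "(-1)^j * coeff (s * s - 1) (2*j) = \<epsilon> * (-1)^j * 2 * coeff s (2*j)"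
    unfolding lowest by (simp only: ac_simps)
  ultimately show ?thesis by metis
qed

lemma Q_iff_pm1:
  fixes s :: "'a::field poly"
  assumes two: "(2::'a) \<noteq> 0" and "\<alpha> < n" and s: "s \<in> R_inv n \<alpha>"
    and \<epsilon>: "\<epsilon> \<in> {1, -1}" "coeff s 0 = \<epsilon>"
    and j: "0 < j" "\<forall>i. 0 < i \<and> i < j \<longrightarrow> coeff s (2*i) = 0" "coeff s (2*j) \<noteq> 0"
  shows "s \<in> Q n \<alpha> \<longleftrightarrow> n - (2*\<alpha>+1) \<le> j \<and> is_nz_square (\<epsilon> * (-1)^j * 2 * coeff s (2*j))"
proof -
  have evs: "even_poly s" using s two by (simp add: R_inv_iff)
  have low: "congr_u (2*j) s [:\<epsilon>:]" using congr_const_below_first[OF evs j(2)] \<epsilon>(2) by simp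
  have "s \<notin> {1, -1}" using j by (auto simp: coeff_const)
  moreover have "2*n - (4*\<alpha>+2) \<le> 2*j \<longleftrightarrow> n - (2*\<alpha>+1) \<le> j" by linarith
  ultimately show ?thesis
    using assms(2) s congr_pm1_iff_le[OF \<epsilon>(1) low j(1,3)]
      ex_norm_congr_square_minus_one_iff[OF two evs \<epsilon>(1) low j(1,3) R_inv_coeff_nonzero_less[OF s j(3)]]
    by (simp add: Q_iff_congr_norm)
qed

lemma Q_pm1_cond_iff:
  assumes \<epsilon>: "\<epsilon> \<in> {1, -1}" "coeff s 0 = \<epsilon>"
    and j: "0 < j" "\<forall>i. 0 < i \<and> i < j \<longrightarrow> coeff s (2*i) = 0" "coeff s (2*j) \<noteq> 0"
    and jL: "2*j < R_len n \<alpha>"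
  shows "Q_pm1_cond n \<alpha> s \<longleftrightarrow> n - (2*\<alpha>+1) \<le> j \<and> is_nz_square (\<epsilon> * (-1)^j * 2 * coeff s (2*j))"
proof
  assume "Q_pm1_cond n \<alpha> s"
  then obtain \<epsilon>' j' s\<^sub>0 where "coeff s 0 = \<epsilon>'"
    and j': "\<forall>i. 0 < i \<and> i < j' \<longrightarrow> coeff s (2*i) = 0" "coeff s (2*j') = s\<^sub>0" "s\<^sub>0 \<noteq> 0" "1 \<le> j'"
    and cond: "n - (2*\<alpha>+1) \<le> j'" "is_nz_square (\<epsilon>' * (-1)^j' * 2 * s\<^sub>0)"
    unfolding Q_pm1_cond_def by blast
  have "\<epsilon>' = \<epsilon>" using \<open>coeff s 0 = \<epsilon>'\<close> \<epsilon>(2) by simp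
  have "\<not> j' < j" using j(2) j' by auto
  moreover have "\<not> j < j'" using j'(1) j(1,3) by auto
  ultimately have "j' = j" by simp
  thus "n - (2*\<alpha>+1) \<le> j \<and> is_nz_square (\<epsilon> * (-1)^j * 2 * coeff s (2*j))"
    using cond j'(2) \<open>\<epsilon>' = \<epsilon>\<close> by simp
next
  assume "n - (2*\<alpha>+1) \<le> j \<and> is_nz_square (\<epsilon> * (-1)^j * 2 * coeff s (2*j))"
  moreover have "j \<le> n - \<alpha> - 1" using jL by (simp add: R_len_def)
  ultimately show "Q_pm1_cond n \<alpha> s"
    unfolding Q_pm1_cond_def using \<epsilon> j by (intro bexI[of _ \<epsilon>] exI[of _ j]) auto
qed

lemma Q_iff_cond:
  fixes s :: "'a::field poly"
  assumes two: "(2::'a) \<noteq> 0" and "\<alpha> < n" and s: "s \<in> R_inv n \<alpha>" and "s \<notin> {1, -1}"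
  shows "s \<in> Q n \<alpha> \<longleftrightarrow> Q_unit_cond n \<alpha> s \<or> Q_pm1_cond n \<alpha> s"
proof (cases "coeff s 0 \<in> {1, -1}")
  case False
  thus ?thesis using Q_iff_unit_cond[OF two assms(2) s False] by (auto simp: Q_pm1_cond_def)
next
  case True
  then obtain \<epsilon> where \<epsilon>: "\<epsilon> \<in> {1, -1}" "coeff s 0 = \<epsilon>" by blast
  have "even_poly s" using s two by (simp add: R_inv_iff)
  moreover have "s \<noteq> [:coeff s 0:]" using assms(4) \<epsilon> by (auto simp: one_pCons)
  ultimately obtain j where j: "0 < j" "\<forall>i. 0 < i \<and> i < j \<longrightarrow> coeff s (2*i) = 0" "coeff s (2*j) \<noteq> 0"
    by (rule first_nonconstant_even_coeff)
  have "\<not> Q_unit_cond n \<alpha> s" using \<epsilon> by (auto simp: Q_unit_cond_def)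
  thus ?thesis
    using Q_iff_pm1[OF two assms(2) s \<epsilon> j] Q_pm1_cond_iff[OF \<epsilon> j R_inv_coeff_nonzero_less[OF s j(3)]]
    by simp
qed

section \<open>Fibres of \<open>pr_alpha\<close>\<close>

lemma pr_alpha_eq_iff_congr_u:
  "pr_alpha n \<alpha> s = pr_alpha n \<alpha> t \<longleftrightarrow> congr_u (2*(n - \<alpha> - 1)) s t"
  by (auto simp: pr_alpha_def congr_u_def poly_eq_iff coeff_trunc_u)

lemma coeff_pr_alpha:
  "coeff (pr_alpha n \<alpha> s) i = (if i < 2*(n - \<alpha> - 1) then coeff s i else 0)"
  by (simp add: pr_alpha_def coeff_trunc_u)

lemma pr_alpha_const: "\<alpha> + 2 \<le> n \<Longrightarrow> pr_alpha n \<alpha> [:c:] = [:c:]"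
  by (auto simp: pr_alpha_def poly_eq_iff coeff_trunc_u coeff_const)

lemma pr_alpha_pm1: "\<alpha> + 2 \<le> n \<Longrightarrow> pr_alpha n \<alpha> 1 = 1 \<and> pr_alpha n \<alpha> (-1) = -1"
  using pr_alpha_const[of \<alpha> n 1] pr_alpha_const[of \<alpha> n "-1"] by (simp add: one_pCons)

lemma R_inv_fiber_pr_alpha:
  fixes s\<^sub>0 :: "'a::field poly"
  assumes two: "(2::'a) \<noteq> 0" and "\<alpha> + 2 \<le> n" and s\<^sub>0: "s\<^sub>0 \<in> R_inv n \<alpha>"
  shows "{s \<in> R_inv n \<alpha>. pr_alpha n \<alpha> s = pr_alpha n \<alpha> s\<^sub>0}
           = range (\<lambda>c. pr_alpha n \<alpha> s\<^sub>0 + monom c (2*(n - \<alpha> - 1)))"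
proof -
  define K where "K = 2*(n - \<alpha> - 1)"
  have L: "R_len n \<alpha> = Suc K" and "even K" using assms(2) by (simp_all add: K_def R_len_def)
  note coeff_pr = coeff_pr_alpha[of n \<alpha>, folded K_def]
  have decomp: "s = pr_alpha n \<alpha> s + monom (coeff s K) K" if "s \<in> R_inv n \<alpha>" for s :: "'a poly"
  proof -
    have "coeff s i = 0" if "K < i" for i
      using \<open>s \<in> R_inv n \<alpha>\<close> that L by (simp add: R_inv_def R_alpha_def)
    thus ?thesis by (auto simp: poly_eq_iff coeff_pr)
  qed
  have in_R_inv: "pr_alpha n \<alpha> s\<^sub>0 + monom c K \<in> R_inv n \<alpha>" for c
    using s\<^sub>0 L \<open>even K\<close> by (auto simp: R_inv_iff[OF two] even_poly_def coeff_pr)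
  have pr: "pr_alpha n \<alpha> (pr_alpha n \<alpha> s\<^sub>0 + monom c K) = pr_alpha n \<alpha> s\<^sub>0" for c
    by (simp add: poly_eq_iff coeff_pr)
  show ?thesis unfolding K_def[symmetric]
  proof (intro equalityI subsetI)
    fix s assume "s \<in> {s \<in> R_inv n \<alpha>. pr_alpha n \<alpha> s = pr_alpha n \<alpha> s\<^sub>0}"
    thus "s \<in> range (\<lambda>c. pr_alpha n \<alpha> s\<^sub>0 + monom c K)" using decomp[of s] by auto
  next
    fix s assume "s \<in> range (\<lambda>c. pr_alpha n \<alpha> s\<^sub>0 + monom c K)"
    thus "s \<in> {s \<in> R_inv n \<alpha>. pr_alpha n \<alpha> s = pr_alpha n \<alpha> s\<^sub>0}" using in_R_inv pr by auto
  qed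
qed

text \<open>If \<open>s\<close> is not \<open>\<plusminus>1\<close> modulo \<open>u\<^sup>K\<close>, the exponent \<open>j\<close> in \<open>Q_pm1_cond\<close> lies below
  \<open>K/2\<close>, so the condition only involves coefficients below \<open>u\<^sup>K\<close>.\<close>

lemma Q_pm1_cond_if_congr_u:
  assumes "Q_pm1_cond n \<alpha> s" "even_poly s" "congr_u K s' s"
    and not_pm1: "\<forall>\<epsilon>\<in>{1, -1}. \<not> congr_u K s [:\<epsilon>:]"
  shows "Q_pm1_cond n \<alpha> s'"
proof -
  obtain \<epsilon> j s\<^sub>0 where \<epsilon>: "\<epsilon> \<in> {1, -1}" "coeff s 0 = \<epsilon>"
    and j: "\<forall>i. 0 < i \<and> i < j \<longrightarrow> coeff s (2*i) = 0" "coeff s (2*j) = s\<^sub>0" "s\<^sub>0 \<noteq> 0" "1 \<le> j"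
    and cond: "n - (2*\<alpha>+1) \<le> j" "j \<le> n - \<alpha> - 1" "is_nz_square (\<epsilon> * (-1)^j * 2 * s\<^sub>0)"
    using assms(1) unfolding Q_pm1_cond_def by blast
  have "congr_u (2*j) s [:\<epsilon>:]" using congr_const_below_first[OF assms(2) j(1)] \<epsilon>(2) by simp
  hence "2*j < K" using not_pm1 \<epsilon>(1) congr_u_mono by (metis not_less)
  hence "coeff s' 0 = \<epsilon>" "\<forall>i. 0 < i \<and> i < j \<longrightarrow> coeff s' (2*i) = 0" "coeff s' (2*j) = s\<^sub>0"
    using assms(3) \<epsilon>(2) j(1,2) by (auto simp: congr_u_def)
  thus ?thesis unfolding Q_pm1_cond_def using \<epsilon>(1) j(3,4) cond by blast
qed

lemma Q_if_pr_alpha_eq: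
  fixes s :: "'a::field poly"
  assumes two: "(2::'a) \<noteq> 0" and n: "\<alpha> + 2 \<le> n" and s: "s \<in> Q n \<alpha>" and s': "s' \<in> R_inv n \<alpha>"
    and pr: "pr_alpha n \<alpha> s' = pr_alpha n \<alpha> s" and pr_pm1: "pr_alpha n \<alpha> s \<notin> {1, -1}"
  shows "s' \<in> Q n \<alpha>"
proof -
  have sR: "s \<in> R_inv n \<alpha>" using s Q_subset_R_inv by blast
  have "\<alpha> < n" using n by simp
  have "s \<notin> {1, -1}" using pr_pm1 pr_alpha_pm1[OF n] by auto
  have "s' \<notin> {1, -1}" using pr_pm1 pr_alpha_pm1[OF n] unfolding pr[symmetric] by auto
  have congr: "congr_u (2*(n - \<alpha> - 1)) s' s" using pr by (simp add: pr_alpha_eq_iff_congr_u)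
  have "\<forall>\<epsilon>\<in>{1, -1}. \<not> congr_u (2*(n - \<alpha> - 1)) s [:\<epsilon>:]"
  proof (intro ballI notI)
    fix \<epsilon> :: 'a assume "\<epsilon> \<in> {1, -1}" "congr_u (2*(n - \<alpha> - 1)) s [:\<epsilon>:]"
    hence "pr_alpha n \<alpha> s = [:\<epsilon>:]" "\<epsilon> \<in> {1, -1}"
      using pr_alpha_eq_iff_congr_u[of n \<alpha> s "[:\<epsilon>:]"] pr_alpha_const[OF n] by simp_all
    thus False using pr_pm1 by (auto simp: one_pCons)
  qed
  moreover have "coeff s' 0 = coeff s 0" using congr n by (simp add: congr_u_def)
  moreover have "Q_unit_cond n \<alpha> s \<or> Q_pm1_cond n \<alpha> s"
    using Q_iff_cond[OF two \<open>\<alpha> < n\<close> sR \<open>s \<notin> {1, -1}\<close>] s by blast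
  ultimately have "Q_unit_cond n \<alpha> s' \<or> Q_pm1_cond n \<alpha> s'"
    using Q_pm1_cond_if_congr_u[OF _ _ congr] sR two by (auto simp: Q_unit_cond_def R_inv_iff)
  thus ?thesis using Q_iff_cond[OF two \<open>\<alpha> < n\<close> s' \<open>s' \<notin> {1, -1}\<close>] by blast
qed

lemma const_add_monom_in_Q_iff:
  fixes \<epsilon> :: "'a::field"
  assumes two: "(2::'a) \<noteq> 0" and n: "\<alpha> + 2 \<le> n" and \<epsilon>: "\<epsilon> \<in> {1, -1}"
  shows "[:\<epsilon>:] + monom c (2*(n - \<alpha> - 1)) \<in> Q n \<alpha> \<longleftrightarrow> is_nz_square (\<epsilon> * (-1)^(n - \<alpha> - 1) * 2 * c)"
proof (cases "c = 0")
  case True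
  thus ?thesis using \<epsilon> by (auto simp: Q_def is_nz_square_def one_pCons)
next
  case False
  define j where "j = n - \<alpha> - 1"
  define s where "s = [:\<epsilon>:] + monom c (2*j)"
  have "0 < j" using n by (simp add: j_def)
  have coeff_s: "coeff s i = (if i = 0 then \<epsilon> else 0) + (if i = 2*j then c else 0)" for i
    by (simp add: s_def coeff_const)
  have "s \<in> R_inv n \<alpha>"
    using two \<open>0 < j\<close> n by (auto simp: R_inv_iff even_poly_def coeff_s j_def R_len_def)
  moreover have "coeff s 0 = \<epsilon>" "\<forall>i. 0 < i \<and> i < j \<longrightarrow> coeff s (2*i) = 0" "coeff s (2*j) = c"
    using \<open>0 < j\<close> by (simp_all add: coeff_s)
  moreover have "\<alpha> < n" "n - (2*\<alpha>+1) \<le> j" using n by (simp_all add: j_def)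
  ultimately show ?thesis
    using Q_iff_pm1[OF two _ _ \<epsilon>, of \<alpha> n s j] \<open>0 < j\<close> False by (simp add: s_def j_def)
qed

lemma card_R_inv_fiber_pr_alpha:
  fixes s\<^sub>0 :: "'a::{finite,field} poly"
  assumes "(2::'a) \<noteq> 0" "\<alpha> + 2 \<le> n" "s\<^sub>0 \<in> R_inv n \<alpha>"
  shows "card {s \<in> R_inv n \<alpha>. pr_alpha n \<alpha> s = pr_alpha n \<alpha> s\<^sub>0} = CARD('a)"
proof -
  have "inj (\<lambda>c. pr_alpha n \<alpha> s\<^sub>0 + monom c (2*(n - \<alpha> - 1)))" by (rule injI) simp
  thus ?thesis unfolding R_inv_fiber_pr_alpha[OF assms] by (simp add: card_image)
qed

lemma card_Q_fiber_pr_alpha_pm1: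
  fixes \<epsilon> :: "'a::{finite,field}"
  assumes two: "(2::'a) \<noteq> 0" and n: "\<alpha> + 2 \<le> n" and \<epsilon>: "\<epsilon> \<in> {1, -1}"
  shows "card {s \<in> Q n \<alpha>. pr_alpha n \<alpha> s = [:\<epsilon>:]} = (CARD('a) - 1) div 2"
proof -
  define g where "g = (\<lambda>c. [:\<epsilon>:] + monom c (2*(n - \<alpha> - 1)))"
  have "[:\<epsilon>:] \<in> R_inv n \<alpha>" using two n by (simp add: R_inv_iff even_poly_const coeff_const R_len_def)
  hence "{s \<in> R_inv n \<alpha>. pr_alpha n \<alpha> s = [:\<epsilon>:]} = range g"
    using R_inv_fiber_pr_alpha[OF two n, of "[:\<epsilon>:]"] by (simp add: pr_alpha_const[OF n] g_def)
  hence fibre: "s \<in> R_inv n \<alpha> \<and> pr_alpha n \<alpha> s = [:\<epsilon>:] \<longleftrightarrow> (\<exists>c. s = g c)" for s by blast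
  have "{s \<in> Q n \<alpha>. pr_alpha n \<alpha> s = [:\<epsilon>:]} = g ` {c. g c \<in> Q n \<alpha>}"
  proof (intro equalityI subsetI)
    fix s assume "s \<in> {s \<in> Q n \<alpha>. pr_alpha n \<alpha> s = [:\<epsilon>:]}"
    moreover from this obtain c where "s = g c" using fibre Q_subset_R_inv by blast
    ultimately show "s \<in> g ` {c. g c \<in> Q n \<alpha>}" by blast
  qed (use fibre in blast)
  also have "\<dots> = g ` {c. is_nz_square (\<epsilon> * (-1)^(n - \<alpha> - 1) * 2 * c)}"
    using const_add_monom_in_Q_iff[OF two n \<epsilon>] by (simp add: g_def)
  finally have "card {s \<in> Q n \<alpha>. pr_alpha n \<alpha> s = [:\<epsilon>:]}
      = card {c. is_nz_square (\<epsilon> * (-1)^(n - \<alpha> - 1) * 2 * c)}"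
    by (simp add: card_image inj_on_def g_def)
  also have "\<dots> = (CARD('a) - 1) div 2"
  proof (rule card_nz_square_multiples[OF two])
    show "\<epsilon> * (-1)^(n - \<alpha> - 1) * 2 \<noteq> 0" using \<epsilon> two by auto
  qed
  finally show ?thesis .
qed

lemma Q_top_eq:
  assumes two: "(2::'a::field) \<noteq> 0" and "n \<ge> 1"
  shows "(Q n (n - 1) :: 'a poly set) = (\<lambda>c. [:c:]) ` {c. is_nz_square (c^2 - 1)}"
proof -
  have L: "R_len n (n - 1) = 1" using assms(2) by (simp add: R_len_def)
  have const: "[:c:] \<in> R_inv n (n - 1)" for c :: 'a
    using two L by (simp add: R_inv_iff even_poly_const coeff_const)
  have R_inv: "s = [:coeff s 0:]" if "s \<in> R_inv n (n - 1)" for s :: "'a poly"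
    using that L by (auto simp: R_inv_def R_alpha_def poly_eq_iff coeff_const)
  have "[:c:] \<in> Q n (n - 1) \<longleftrightarrow> is_nz_square (c^2 - 1)" for c :: 'a
  proof (cases "c \<in> {1, -1}")
    case True
    hence "[:c:] \<in> {1, -1}" by (auto simp: one_pCons)
    moreover have "\<not> is_nz_square (c^2 - 1)" using True by (auto simp: is_nz_square_def)
    ultimately show ?thesis by (simp add: Q_def)
  next
    case False
    moreover have "n div 2 \<le> n - 1" using assms(2) by simp
    ultimately show ?thesis
      using Q_iff_unit_cond[OF two _ const] assms(2) by (simp add: Q_unit_cond_def)
  qed
  moreover have "s \<in> range (\<lambda>c. [:c:])" if "s \<in> Q n (n - 1)" for s :: "'a poly"
    using R_inv that Q_subset_R_inv by blast
  ultimately show ?thesis by blast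
qed

lemma Q_iff_R_inv_fiber_subset:
  fixes s\<^sub>0 :: "'a::field poly"
  assumes two: "(2::'a) \<noteq> 0" and n: "\<alpha> + 2 \<le> n" and "s\<^sub>0 \<in> R_inv n \<alpha>"
    and "pr_alpha n \<alpha> s\<^sub>0 \<notin> {1, -1}"
  shows "s\<^sub>0 \<in> Q n \<alpha> \<longleftrightarrow> {s \<in> R_inv n \<alpha>. pr_alpha n \<alpha> s = pr_alpha n \<alpha> s\<^sub>0} \<subseteq> Q n \<alpha>"
  using assms Q_if_pr_alpha_eq[OF two n, of s\<^sub>0] by blast

lemma card_Q_top:
  assumes two: "(2::'a::{finite,field}) \<noteq> 0" and "n \<ge> 1"
  shows "card (Q n (n - 1) :: 'a poly set) = (CARD('a) - 3) div 2"
proof -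
  have "inj (\<lambda>c::'a. [:c:])" by (rule injI) simp
  thus ?thesis
    unfolding Q_top_eq[OF assms] card_nz_square_minus_one[OF two, symmetric]
    by (simp add: card_image inj_on_subset)
qed

theorem lemma4p15:
  fixes n :: nat and k :: "'a::{finite,field} itself"
  assumes "odd (CARD('a))" and "n \<ge> 1"
  shows "(\<forall>\<alpha><n. \<forall>s \<in> (R_inv n \<alpha> :: 'a poly set) - {1, -1}.
            s \<in> Q n \<alpha> \<longleftrightarrow>
              ((\<alpha> \<ge> n div 2 \<and> coeff s 0 \<noteq> 1 \<and> coeff s 0 \<noteq> -1
                 \<and> is_nz_square ((coeff s 0)^2 - 1))
               \<or> (\<exists>\<epsilon>\<in>{1, -1}. \<exists>j s\<^sub>0. coeff s 0 = \<epsilon>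
                    \<and> (\<forall>i. 0 < i \<and> i < j \<longrightarrow> coeff s (2*i) = 0)
                    \<and> coeff s (2*j) = s\<^sub>0 \<and> s\<^sub>0 \<noteq> 0
                    \<and> 1 \<le> j \<and> n - (2*\<alpha>+1) \<le> j \<and> j \<le> n - \<alpha> - 1
                    \<and> is_nz_square (\<epsilon> * (-1)^j * 2 * s\<^sub>0))))
       \<and> (\<forall>\<alpha>. \<alpha> + 2 \<le> n \<longrightarrow>
            card {s \<in> (Q n \<alpha> :: 'a poly set). pr_alpha n \<alpha> s = 1} = (CARD('a) - 1) div 2
          \<and> card {s \<in> (Q n \<alpha> :: 'a poly set). pr_alpha n \<alpha> s = -1} = (CARD('a) - 1) div 2)
       \<and> (\<forall>\<alpha> (s\<^sub>0::'a poly). \<alpha> + 2 \<le> n \<and> s\<^sub>0 \<in> R_inv' n \<alpha> \<and> pr_alpha n \<alpha> s\<^sub>0 \<notin> {1, -1} \<longrightarrow>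
            card {s \<in> R_inv n \<alpha>. pr_alpha n \<alpha> s = pr_alpha n \<alpha> s\<^sub>0} = CARD('a)
          \<and> (s\<^sub>0 \<in> Q n \<alpha> \<longleftrightarrow> {s \<in> R_inv n \<alpha>. pr_alpha n \<alpha> s = pr_alpha n \<alpha> s\<^sub>0} \<subseteq> Q n \<alpha>))
       \<and> card (Q n (n - 1) :: 'a poly set) = (CARD('a) - 3) div 2"
proof -
  have two: "(2::'a) \<noteq> 0" using assms(1) by (rule two_neq_zero_if_odd_card)
  show ?thesis
    apply (intro conjI allI impI ballI)
    subgoal for \<alpha> s
      using Q_iff_cond[OF two, of \<alpha> n s] by (simp add: Q_unit_cond_def Q_pm1_cond_def)
    subgoal for \<alpha> using card_Q_fiber_pr_alpha_pm1[OF two, of \<alpha> n 1] by (simp add: one_pCons)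
    subgoal for \<alpha> using card_Q_fiber_pr_alpha_pm1[OF two, of \<alpha> n "-1"] by (simp add: one_pCons)
    subgoal for \<alpha> s\<^sub>0 using card_R_inv_fiber_pr_alpha[OF two, of \<alpha> n s\<^sub>0] by (simp add: R_inv'_def)
    subgoal for \<alpha> s\<^sub>0 using Q_iff_R_inv_fiber_subset[OF two, of \<alpha> n s\<^sub>0] by (simp add: R_inv'_def)
    subgoal using card_Q_top[OF two assms(2)] .
    done
qed

end
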